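(* Let $\mathcal{B}\subseteq\{1,2\}^3$ be a basic set, with associated SNRE sequences $(a_n),(b_n)$ and $S_2$-SFT $X^{\mathcal{B}}$. If $a_1=b_1$, then $h(X^{\mathcal{B}})=\frac12\ln a_1$.
   Context: $S_2$ is the free semigroup on two generators, identified with the set of finite words over $\{1,2\}$ (the binary tree with root the empty word $\epsilon$). The alphabet is $\mathcal{A}=\{1,2\}$. A basic set $\mathcal{B}\subseteq\mathcal{A}^3$ is a set of admissible 2-blocks $(i,i_1,i_2)$; $X^{\mathcal{B}}$ is the associated $S_2$-SFT. For $n\ge0$, $B_n(X^{\mathcal{B}})$ is the set of maps $u$ from words of length $\le n$ to $\mathcal{A}$ with $(u(w),u(w1),u(w2))\in\mathcal{B}$ for all words $w$ of length $\le n-1$; $a_n$ (resp. $b_n$) is the number of such $u$ with $u(\epsilon)=1$ (resp. $2$). Equivalently $a_0=b_0=1$, $a_n=F^{(a)}(a_{n-1},b_{n-1})$, $b_n=F^{(b)}(a_{n-1},b_{n-1})$ where $F^{(a)}(x,y)=\sum_{(1,i,j)\in\mathcal{B}}z_iz_j$, $F^{(b)}(x,y)=\sum_{(2,i,j)\in\mathcal{B}}z_iz_j$ with $z_1=x,z_2=y$; this is the SNRE of $X^{\mathcal{B}}$. The set $E_n$ of elements of length $\le n$ has $|E_n|=2^{n+1}-1$, and the entropy is $h(X^{\mathcal{B}})=\limsup_{n\to\infty}\frac{\ln|B_n(X^{\mathcal{B}})|}{|E_n|}=\limsup_{n\to\infty}\frac{\ln(a_n+b_n)}{2^{n+1}-1}$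 (this limsup is known to be a limit). *)

theory Defs
  imports "HOL-Analysis.Analysis" "HOL-Library.FuncSet"
begin

text \<open>Alphabet A = {1,2} (as naturals). Elements of S_2 = words over {1,2}, as lists;
  the children of w are w@[1] and w@[2]. A basic set is B \<subseteq> A^3.\<close>

definition words_le :: "nat \<Rightarrow> nat list set" where
  "words_le n = {w. set w \<subseteq> {1,2} \<and> length w \<le> n}"

definition blocks :: "(nat \<times> nat \<times> nat) set \<Rightarrow> nat \<Rightarrow> (nat list \<Rightarrow> nat) set" where
  "blocks B n = {u \<in> words_le n \<rightarrow>\<^sub>E {1,2}.
      \<forall>w \<in> words_le n. length w < n \<longrightarrow> (u w, u (w @ [1]), u (w @ [2])) \<in> B}"

definition snre_F :: "(nat \<times> nat \<times> nat) set \<Rightarrow> nat \<Rightarrow> nat \<Rightarrow> nat \<Rightarrow> nat" where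
  "snre_F B k x y = (\<Sum>(i,j) \<in> {(i,j). (k,i,j) \<in> B}.
      (if i = 1 then x else y) * (if j = 1 then x else y))"

fun snre :: "(nat \<times> nat \<times> nat) set \<Rightarrow> nat \<Rightarrow> nat \<times> nat" where
  "snre B 0 = (1, 1)"
| "snre B (Suc n) = (snre_F B 1 (fst (snre B n)) (snd (snre B n))
                   , snre_F B 2 (fst (snre B n)) (snd (snre B n)))"

definition snre_a :: "(nat \<times> nat \<times> nat) set \<Rightarrow> nat \<Rightarrow> nat" where
  "snre_a B n = fst (snre B n)"

definition snre_b :: "(nat \<times> nat \<times> nat) set \<Rightarrow> nat \<Rightarrow> nat" where
  "snre_b B n = snd (snre B n)"

text \<open>Entropy h(X^B) = limsup ln |B_n| / |E_n|, |E_n| = 2^(n+1) - 1.\<close>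
definition sft_entropy :: "(nat \<times> nat \<times> nat) set \<Rightarrow> ereal" where
  "sft_entropy B = limsup (\<lambda>n. ereal (ln (real (card (blocks B n))) / (2 ^ (n + 1) - 1)))"

end

theory Submission
  imports Defs "HOL-Real_Asymp.Real_Asymp"
begin

text \<open>A pattern on E_(n+1) with root k is the same as an admissible triple (k,i,j) in B together
  with two patterns on E_n rooted at i and j, grafted below the root. Hence the numbers of
  patterns with root 1 and 2 satisfy the SNRE, and |B_n| = a_n + b_n. If a_1 = b_1 = c, then
  both roots admit exactly c child pairs, so a_n = b_n = c^(2^n - 1) and
  ln |B_n| / (2^(n+1) - 1) = (ln 2 + (2^n - 1) ln c) / (2^(n+1) - 1) tends to (ln c)/2.\<close>

lemma Nil_in_words_le [simp]: "[] \<in> words_le n"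
  by (simp add: words_le_def)

lemma Cons_in_words_le_Suc [simp]: "c # w \<in> words_le (Suc n) \<longleftrightarrow> c \<in> {1,2} \<and> w \<in> words_le n"
  by (auto simp: words_le_def)

lemma words_le_0: "words_le 0 = {[]}"
  by (auto simp: words_le_def)

lemma snoc_in_words_le:
  "w \<in> words_le n \<Longrightarrow> length w < n \<Longrightarrow> c \<in> {1,2} \<Longrightarrow> w @ [c] \<in> words_le n"
  by (auto simp: words_le_def)

lemma finite_words_le: "finite (words_le n)"
proof -
  have "finite {w. set w \<subseteq> {1::nat,2} \<and> length w \<le> n}"
    by (rule finite_lists_length_le) auto
  then show ?thesis by (simp add: words_le_def)
qed

lemma snre_a_0 [simp]: "snre_a B 0 = 1"
  and snre_b_0 [simp]: "snre_b B 0 = 1"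
  and snre_a_Suc [simp]: "snre_a B (Suc n) = snre_F B 1 (snre_a B n) (snre_b B n)"
  and snre_b_Suc [simp]: "snre_b B (Suc n) = snre_F B 2 (snre_a B n) (snre_b B n)"
  by (simp_all add: snre_a_def snre_b_def)

definition rooted_blocks :: "(nat \<times> nat \<times> nat) set \<Rightarrow> nat \<Rightarrow> nat \<Rightarrow> (nat list \<Rightarrow> nat) set" where
  "rooted_blocks B k n = {u \<in> blocks B n. u [] = k}"

lemma finite_rooted_blocks: "finite (rooted_blocks B k n)"
proof (rule finite_subset)
  show "rooted_blocks B k n \<subseteq> words_le n \<rightarrow>\<^sub>E {1,2}"
    by (auto simp: rooted_blocks_def blocks_def)
  show "finite (words_le n \<rightarrow>\<^sub>E ({1,2} :: nat set))"
    by (simp add: finite_PiE finite_words_le)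
qed

lemma card_blocks_eq_sum_roots:
  "card (blocks B n) = card (rooted_blocks B 1 n) + card (rooted_blocks B 2 n)"
proof -
  have "blocks B n = rooted_blocks B 1 n \<union> rooted_blocks B 2 n"
    by (auto simp: rooted_blocks_def blocks_def PiE_iff)
  moreover have "rooted_blocks B 1 n \<inter> rooted_blocks B 2 n = {}"
    by (auto simp: rooted_blocks_def)
  ultimately show ?thesis
    by (simp add: card_Un_disjoint finite_rooted_blocks)
qed

definition subtree :: "nat \<Rightarrow> nat \<Rightarrow> (nat list \<Rightarrow> nat) \<Rightarrow> nat list \<Rightarrow> nat" where
  "subtree n c u = restrict (\<lambda>w. u (c # w)) (words_le n)"

definition graft :: "nat \<Rightarrow> nat \<Rightarrow> (nat list \<Rightarrow> nat) \<Rightarrow> (nat list \<Rightarrow> nat) \<Rightarrow> nat list \<Rightarrow> nat" where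
  "graft n k u1 u2 = restrict (\<lambda>w. case w of [] \<Rightarrow> k | c # w' \<Rightarrow> if c = 1 then u1 w' else u2 w')
     (words_le (Suc n))"

lemma root_children_in_basic_set:
  assumes "u \<in> rooted_blocks B k (Suc n)"
  shows "(k, u [1], u [2]) \<in> B"
proof -
  have "\<forall>w \<in> words_le (Suc n). length w < Suc n \<longrightarrow> (u w, u (w @ [1]), u (w @ [2])) \<in> B"
    and "u [] = k"
    using assms by (simp_all add: rooted_blocks_def blocks_def)
  from this(1)[rule_format, OF Nil_in_words_le] this(2) show ?thesis
    by simp
qed

lemma subtree_in_rooted_blocks:
  assumes u: "u \<in> rooted_blocks B k (Suc n)" and c: "c \<in> {1,2}"
  shows "subtree n c u \<in> rooted_blocks B (u [c]) n"
proof -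
  have "subtree n c u \<in> words_le n \<rightarrow>\<^sub>E {1,2}"
    using u c by (auto simp: subtree_def rooted_blocks_def blocks_def PiE_iff)
  moreover have "(subtree n c u w, subtree n c u (w @ [1]), subtree n c u (w @ [2])) \<in> B"
    if w: "w \<in> words_le n" "length w < n" for w
  proof -
    have "c # w \<in> words_le (Suc n)" "length (c # w) < Suc n"
      using c w by auto
    then have "(u (c # w), u ((c # w) @ [1]), u ((c # w) @ [2])) \<in> B"
      using u unfolding rooted_blocks_def blocks_def by blast
    then show ?thesis
      using w by (simp add: subtree_def snoc_in_words_le)
  qed
  ultimately show ?thesis
    by (simp add: rooted_blocks_def blocks_def subtree_def)
qed

lemma graft_in_rooted_blocks:
  assumes B: "B \<subseteq> {1,2} \<times> {1,2} \<times> {1,2}" and kij: "(k, i, j) \<in> B"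
    and u1: "u1 \<in> rooted_blocks B i n" and u2: "u2 \<in> rooted_blocks B j n"
  shows "graft n k u1 u2 \<in> rooted_blocks B k (Suc n)"
proof -
  let ?v = "graft n k u1 u2"
  have pattern: "u \<in> words_le n \<rightarrow>\<^sub>E {1,2}"
    and admissible: "w \<in> words_le n \<Longrightarrow> length w < n \<Longrightarrow> (u w, u (w @ [1]), u (w @ [2])) \<in> B"
    if "u \<in> rooted_blocks B m n" for u m w
    using that by (auto simp: rooted_blocks_def blocks_def)
  have "?v \<in> words_le (Suc n) \<rightarrow>\<^sub>E {1,2}"
  proof -
    have "?v w \<in> {1,2}" if "w \<in> words_le (Suc n)" for w
      using that kij B pattern[OF u1] pattern[OF u2]
      by (cases w) (auto simp: graft_def PiE_iff)
    then show ?thesis by (auto simp: graft_def)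
  qed
  moreover have "(?v w, ?v (w @ [1]), ?v (w @ [2])) \<in> B"
    if w: "w \<in> words_le (Suc n)" "length w < Suc n" for w
  proof (cases w)
    case Nil
    then show ?thesis using kij u1 u2 by (simp add: graft_def rooted_blocks_def)
  next
    case (Cons c w')
    then have w': "c \<in> {1,2}" "w' \<in> words_le n" "length w' < n" using w by auto
    have snoc: "w' @ [1] \<in> words_le n" "w' @ [2] \<in> words_le n"
      using w' snoc_in_words_le by auto
    consider "c = 1" | "c = 2" using w'(1) by auto
    then show ?thesis
    proof cases
      case 1
      then show ?thesis
        using admissible[OF u1 w'(2,3)] Cons w' snoc by (simp add: graft_def)
    next
      case 2
      then show ?thesis
        using admissible[OF u2 w'(2,3)] Cons w' snoc by (simp add: graft_def)
    qed
  qed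
  moreover have "?v [] = k"
    by (simp add: graft_def)
  ultimately show ?thesis
    unfolding rooted_blocks_def blocks_def by blast
qed

lemma graft_subtrees:
  assumes "u \<in> rooted_blocks B k (Suc n)"
  shows "graft n k (subtree n 1 u) (subtree n 2 u) = u"
proof
  fix w
  show "graft n k (subtree n 1 u) (subtree n 2 u) w = u w"
    using assms by (cases w)
      (auto simp: graft_def subtree_def rooted_blocks_def blocks_def PiE_iff extensional_def)
qed

lemma graft_at_child: "c \<in> {1,2} \<Longrightarrow> graft n k u1 u2 [c] = (if c = 1 then u1 [] else u2 [])"
  by (simp add: graft_def)

lemma subtree_graft:
  assumes "u1 \<in> words_le n \<rightarrow>\<^sub>E A" and "u2 \<in> words_le n \<rightarrow>\<^sub>E A" and "c \<in> {1,2}"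
  shows "subtree n c (graft n k u1 u2) = (if c = 1 then u1 else u2)"
  using assms by (auto simp: subtree_def graft_def PiE_iff extensional_def fun_eq_iff)

lemma bij_betw_rooted_blocks_Suc:
  assumes B: "B \<subseteq> {1,2} \<times> {1,2} \<times> {1,2}"
  shows "bij_betw (\<lambda>u. ((u [1], u [2]), subtree n 1 u, subtree n 2 u))
    (rooted_blocks B k (Suc n))
    (SIGMA (i, j) : {(i, j). (k, i, j) \<in> B}. rooted_blocks B i n \<times> rooted_blocks B j n)"
proof (rule bij_betw_byWitness[where f' = "\<lambda>((i, j), u1, u2). graft n k u1 u2"])
  show "\<forall>u \<in> rooted_blocks B k (Suc n). (\<lambda>((i, j), u1, u2). graft n k u1 u2)
      ((u [1], u [2]), subtree n 1 u, subtree n 2 u) = u"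
    using graft_subtrees by auto
  show "\<forall>x \<in> (SIGMA (i, j) : {(i, j). (k, i, j) \<in> B}. rooted_blocks B i n \<times> rooted_blocks B j n).
      (\<lambda>u. ((u [1], u [2]), subtree n 1 u, subtree n 2 u))
        ((\<lambda>((i, j), u1, u2). graft n k u1 u2) x) = x"
    by (auto simp: graft_at_child subtree_graft rooted_blocks_def blocks_def)
  show "(\<lambda>u. ((u [1], u [2]), subtree n 1 u, subtree n 2 u)) ` rooted_blocks B k (Suc n)
      \<subseteq> (SIGMA (i, j) : {(i, j). (k, i, j) \<in> B}. rooted_blocks B i n \<times> rooted_blocks B j n)"
  proof (rule image_subsetI)
    fix u assume u: "u \<in> rooted_blocks B k (Suc n)"
    show "((u [1], u [2]), subtree n 1 u, subtree n 2 u)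
        \<in> (SIGMA (i, j) : {(i, j). (k, i, j) \<in> B}. rooted_blocks B i n \<times> rooted_blocks B j n)"
      using root_children_in_basic_set[OF u] subtree_in_rooted_blocks[OF u, of 1]
        subtree_in_rooted_blocks[OF u, of 2]
      by blast
  qed
  show "(\<lambda>((i, j), u1, u2). graft n k u1 u2) `
      (SIGMA (i, j) : {(i, j). (k, i, j) \<in> B}. rooted_blocks B i n \<times> rooted_blocks B j n)
      \<subseteq> rooted_blocks B k (Suc n)"
    using graft_in_rooted_blocks[OF B] by auto
qed

lemma card_rooted_blocks_Suc:
  assumes B: "B \<subseteq> {1,2} \<times> {1,2} \<times> {1,2}"
  shows "card (rooted_blocks B k (Suc n))
    = (\<Sum>(i, j) \<in> {(i, j). (k, i, j) \<in> B}. card (rooted_blocks B i n) * card (rooted_blocks B j n))"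
proof -
  have fin: "finite {(i, j). (k, i, j) \<in> B}"
    by (rule finite_subset[of _ "{1,2} \<times> {1,2}"]) (use B in auto)
  have "card (rooted_blocks B k (Suc n))
      = card (SIGMA (i, j) : {(i, j). (k, i, j) \<in> B}. rooted_blocks B i n \<times> rooted_blocks B j n)"
    using bij_betw_same_card[OF bij_betw_rooted_blocks_Suc[OF B]] .
  also have "\<dots> = (\<Sum>(i, j) \<in> {(i, j). (k, i, j) \<in> B}. card (rooted_blocks B i n \<times> rooted_blocks B j n))"
    by (subst card_SigmaI) (auto simp: fin finite_rooted_blocks case_prod_beta)
  finally show ?thesis
    by (simp add: card_cartesian_product case_prod_beta)
qed

lemma card_rooted_blocks_snre:
  assumes B: "B \<subseteq> {1,2} \<times> {1,2} \<times> {1,2}" and k: "k \<in> {1,2}"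
  shows "card (rooted_blocks B k n) = (if k = 1 then snre_a B n else snre_b B n)"
  using k
proof (induction n arbitrary: k)
  case 0
  have "rooted_blocks B k 0 = {restrict (\<lambda>_. k) {[]}}"
    using 0 by (auto simp: rooted_blocks_def blocks_def words_le_0 PiE_iff extensional_def)
  then show ?case by simp
next
  case (Suc n)
  have "card (rooted_blocks B k (Suc n))
      = (\<Sum>(i, j) \<in> {(i, j). (k, i, j) \<in> B}.
          (if i = 1 then snre_a B n else snre_b B n) * (if j = 1 then snre_a B n else snre_b B n))"
    unfolding card_rooted_blocks_Suc[OF B]
    by (rule sum.cong) (use B Suc.IH in auto)
  then show ?case
    using Suc.prems by (auto simp: snre_F_def)
qed

lemma card_blocks_snre:
  assumes "B \<subseteq> {1,2} \<times> {1,2} \<times> {1,2}"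
  shows "card (blocks B n) = snre_a B n + snre_b B n"
  by (simp add: card_blocks_eq_sum_roots card_rooted_blocks_snre[OF assms])

lemma snre_F_diagonal: "snre_F B k x x = card {(i, j). (k, i, j) \<in> B} * (x * x)"
  by (simp add: snre_F_def case_prod_beta)

lemma snre_balanced:
  assumes "snre_a B 1 = snre_b B 1"
  shows "snre_a B n = snre_a B 1 ^ (2 ^ n - 1) \<and> snre_b B n = snre_a B 1 ^ (2 ^ n - 1)"
proof (induction n)
  case 0
  then show ?case by simp
next
  case (Suc n)
  let ?c = "snre_a B 1"
  \<comment> \<open>Since snre starts at (1,1), a_1 and b_1 count the child pairs allowed below roots 1 and 2.\<close>
  have children: "card {(i, j). (1, i, j) \<in> B} = ?c" "card {(i, j). (2, i, j) \<in> B} = ?c"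
    using assms by (simp_all add: snre_F_diagonal)
  have "?c * (?c ^ (2 ^ n - 1) * ?c ^ (2 ^ n - 1)) = ?c ^ (1 + (2 ^ n - 1) + (2 ^ n - 1))"
    by (simp only: power_add power_one_right mult.assoc)
  also have "1 + (2 ^ n - 1) + (2 ^ n - 1) = (2 ^ Suc n - 1 :: nat)"
    using one_le_power[of 2 n] by simp
  finally show ?case
    using Suc.IH by (simp add: snre_F_diagonal children)
qed

lemma ln_double_power_ratio_tendsto:
  fixes c :: nat
  shows "(\<lambda>n. ln (real (2 * c ^ (2 ^ n - 1))) / (2 ^ (n + 1) - 1)) \<longlonglongrightarrow> ln (real c) / 2"
proof (cases "c = 0")
  case True
  \<comment> \<open>Here the limit is ln 0 / 2 = 0, with Isabelle's junk value ln 0 = 0.\<close>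
  have "\<forall>\<^sub>F n in sequentially. ln (real (2 * c ^ (2 ^ n - 1))) / (2 ^ (n + 1) - 1) = (0 :: real)"
    using eventually_ge_at_top[of "1::nat"]
  proof (rule eventually_mono)
    fix n :: nat assume "1 \<le> n"
    then have "2 ^ n - 1 \<noteq> (0 :: nat)"
      using power_increasing[of 1 n "2::nat"] by simp
    then have "c ^ (2 ^ n - 1) = 0"
      using True by simp
    then show "ln (real (2 * c ^ (2 ^ n - 1))) / (2 ^ (n + 1) - 1) = 0"
      by (simp only: mult_0_right of_nat_0 ln_0 div_0)
  qed
  then have "(\<lambda>n. ln (real (2 * c ^ (2 ^ n - 1))) / (2 ^ (n + 1) - 1)) \<longlonglongrightarrow> 0"
    by (rule tendsto_eventually)
  then show ?thesis
    using True by simp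
next
  case False
  have "ln (real (2 * c ^ (2 ^ n - 1))) = ln 2 + (2 ^ n - 1) * ln (real c)" for n
    using False by (simp add: ln_mult ln_realpow of_nat_diff)
  moreover have "(\<lambda>n::nat. (ln 2 + (2 ^ n - 1) * ln (real c)) / (2 ^ (n + 1) - 1))
      \<longlonglongrightarrow> ln (real c) / 2"
    by real_asymp
  ultimately show ?thesis by simp
qed

theorem proposition2:
  fixes B :: "(nat \<times> nat \<times> nat) set"
  assumes "B \<subseteq> {1,2} \<times> {1,2} \<times> {1,2}"
    and "snre_a B 1 = snre_b B 1"
  shows "sft_entropy B = ereal (ln (real (snre_a B 1)) / 2)"
proof -
  have "card (blocks B n) = 2 * snre_a B 1 ^ (2 ^ n - 1)" for n
    using card_blocks_snre[OF assms(1)] snre_balanced[OF assms(2)] by simp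
  then have "(\<lambda>n. ereal (ln (real (card (blocks B n))) / (2 ^ (n + 1) - 1)))
      \<longlonglongrightarrow> ereal (ln (real (snre_a B 1)) / 2)"
    using ln_double_power_ratio_tendsto by (simp only: tendsto_ereal)
  then show ?thesis
    unfolding sft_entropy_def by (simp add: lim_imp_Limsup)
qed

end
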